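(* Let $r\ge2$ be an integer and $n\in\mathbb N$. There is a constant $c_1>0$ depending only on $r$ such that the following holds. Let $g\in\mathbb W^{r-1}$ and suppose that for some fixed $j\in\mathbb Z$, for each $\nu=j,j+1,\dots,j+2(r-2)$ there is a point $t_\nu\in I_\nu$ with $|g(t_\nu)|\le h^{r-1}$. Then $|g(x)|\le c_1h^{r-1}$ for every $x\in\bigcup_{\nu=j}^{j+2(r-2)}I_\nu$.
   Context: $\mathbb W^{m}$ ($m\in\mathbb N$) is the class of $2\pi$-periodic functions whose derivative of order $m-1$ exists and is absolutely continuous and whose $m$-th derivative satisfies $|g^{(m)}|\le1$ a.e. on $\mathbb R$. For fixed $n$: $x_j:=-j\pi/n$ ($j\in\mathbb Z$), $I_j:=[x_j,x_{j-1}]$, $h:=\pi/n$. *)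

theory Defs
  imports "HOL-Analysis.Analysis"
begin

definition abs_cont_on :: "real \<Rightarrow> real \<Rightarrow> (real \<Rightarrow> real) \<Rightarrow> bool" where
  "abs_cont_on a b f \<longleftrightarrow>
     (\<forall>\<epsilon>>0. \<exists>\<delta>>0. \<forall>(N::nat) (u::nat \<Rightarrow> real) (v::nat \<Rightarrow> real).
        (\<forall>i<N. a \<le> u i \<and> u i \<le> v i \<and> v i \<le> b) \<and>
        (\<forall>i<N. \<forall>k<N. i \<noteq> k \<longrightarrow> v i \<le> u k \<or> v k \<le> u i) \<and>
        (\<Sum>i<N. v i - u i) < \<delta>
        \<longrightarrow> (\<Sum>i<N. \<bar>f (v i) - f (u i)\<bar>) < \<epsilon>)"

definition classW :: "nat \<Rightarrow> (real \<Rightarrow> real) \<Rightarrow> bool" where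
  "classW m g \<longleftrightarrow>
     (\<forall>x. g (x + 2 * pi) = g x) \<and>
     (\<exists>D :: nat \<Rightarrow> real \<Rightarrow> real.
        D 0 = g \<and>
        (\<forall>k < m - 1. \<forall>x. (D k has_real_derivative D (Suc k) x) (at x)) \<and>
        (\<forall>a b. abs_cont_on a b (D (m - 1))) \<and>
        (AE x in lborel. (D (m - 1) has_real_derivative D m x) (at x) \<and> \<bar>D m x\<bar> \<le> 1))"

definition gridpt :: "nat \<Rightarrow> int \<Rightarrow> real" where
  "gridpt n j = - (real_of_int j * pi / real n)"

definition gridI :: "nat \<Rightarrow> int \<Rightarrow> real set" where
  "gridI n j = {gridpt n j .. gridpt n (j - 1)}"

end

theory Submission
  imports Defs "HOL-Computational_Algebra.Polynomial"
begin

text \<open>Write \<open>g = D 0\<close> with \<open>D (r - 2)\<close> 1-Lipschitz; this follows from the absolute continuity of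
  \<open>D (r - 2)\<close> and \<open>|D (r - 1)| \<le> 1\<close> a.e. by a creeping argument, in which the increments near the
  exceptional null set are paid for by the small variation over an open set covering it. One point
  \<open>t\<^sub>\<nu>\<close> from every second interval gives \<open>r - 1\<close> nodes, pairwise at least \<open>h\<close> apart, where
  \<open>|g| \<le> h^(r - 1)\<close>, and every point of the union lies within \<open>(2r - 3) h\<close> of each node. There the
  Lagrange interpolant of \<open>g\<close> at the nodes is \<open>O(h^(r - 1))\<close>, and by Rolle's theorem the
  interpolation error is at most the product of the distances to the nodes, again \<open>O(h^(r - 1))\<close>.\<close>

section \<open>Polynomial interpolation\<close>

lemma Rolle_card_zeros:
  fixes \<phi> \<phi>' :: "real \<Rightarrow> real"
  assumes der: "\<And>x. (\<phi> has_real_derivative \<phi>' x) (at x)"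
  shows "finite Z \<Longrightarrow> card Z = Suc m \<Longrightarrow> (\<forall>z\<in>Z. \<phi> z = 0) \<Longrightarrow>
    \<exists>Z'. finite Z' \<and> card Z' = m \<and> (\<forall>w\<in>Z'. \<phi>' w = 0) \<and> (\<forall>w\<in>Z'. w < Max Z)"
  \<comment> \<open>The bound \<open>w < Max Z\<close> lets the induction add one new zero above the old ones.\<close>
proof (induction m arbitrary: Z)
  case 0
  then show ?case by (intro exI[of _ "{}"]) auto
next
  case (Suc m)
  define z where "z = Max Z"
  define Z0 where "Z0 = Z - {z}"
  have zZ: "z \<in> Z" using Max_in Suc.prems z_def by fastforce
  have cZ0: "card Z0 = Suc m" and fZ0: "finite Z0" using Suc.prems zZ by (simp_all add: Z0_def)
  obtain Z0' where Z0': "finite Z0'" "card Z0' = m" "\<forall>w\<in>Z0'. \<phi>' w = 0" "\<forall>w\<in>Z0'. w < Max Z0"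
    using Suc.IH[OF fZ0 cZ0] Suc.prems(3) Z0_def by auto
  define z0 where "z0 = Max Z0"
  have z0Z0: "z0 \<in> Z0" using Max_in[OF fZ0] cZ0 z0_def by fastforce
  then have lt: "z0 < z" using Suc.prems(1) z_def Z0_def by (simp add: order.strict_iff_order)
  have "\<exists>w. z0 < w \<and> w < z \<and> DERIV \<phi> w :> 0"
  proof (rule Rolle[OF lt])
    show "\<phi> z0 = \<phi> z" using Suc.prems(3) zZ z0Z0 Z0_def by auto
    show "continuous_on {z0..z} \<phi>"
      using der by (meson DERIV_isCont continuous_at_imp_continuous_on)
    show "\<And>x. z0 < x \<Longrightarrow> x < z \<Longrightarrow> \<phi> differentiable (at x)"
      using der real_differentiable_def by blast
  qed
  then obtain w where w: "z0 < w" "w < z" "DERIV \<phi> w :> 0" by blast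
  have "\<phi>' w = 0" using DERIV_unique[OF der w(3)] .
  moreover have "w \<notin> Z0'" using Z0'(4) w(1) z0_def by force
  ultimately show ?case using Z0' w z0_def z_def
    by (intro exI[of _ "insert w Z0'"]) auto
qed

lemma higher_deriv_card_zeros:
  fixes F :: "nat \<Rightarrow> real \<Rightarrow> real"
  assumes der: "\<And>l x. l < k \<Longrightarrow> (F l has_real_derivative F (Suc l) x) (at x)"
    and Z: "finite Z" "card Z = m + k" "\<forall>z\<in>Z. F 0 z = 0"
  shows "\<exists>Z'. finite Z' \<and> card Z' = m \<and> (\<forall>z\<in>Z'. F k z = 0)"
  using der Z(2)
proof (induction k arbitrary: m)
  case 0
  then show ?case using Z by auto
next
  case (Suc k)
  then obtain Z' where "finite Z'" "card Z' = Suc m" "\<forall>z\<in>Z'. F k z = 0"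
    using Z by (metis add_Suc_shift less_SucI)
  then show ?case using Rolle_card_zeros[of "F k" "F (Suc k)"] Suc.prems by blast
qed

definition node_poly :: "(nat \<Rightarrow> real) \<Rightarrow> nat set \<Rightarrow> real poly" where
  "node_poly s I = (\<Prod>j\<in>I. [:- s j, 1:])"

lemma poly_node_poly [simp]: "poly (node_poly s I) x = (\<Prod>j\<in>I. x - s j)"
  by (simp add: node_poly_def poly_prod)

lemma degree_node_poly: "finite I \<Longrightarrow> degree (node_poly s I) = card I"
  unfolding node_poly_def by (subst degree_prod_eq_sum_degree) auto

lemma lead_coeff_node_poly: "finite I \<Longrightarrow> coeff (node_poly s I) (card I) = 1"
  using lead_coeff_prod[of "\<lambda>j. [:- s j, 1:]" I] degree_node_poly[of I s]
  by (simp add: node_poly_def)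

definition lagrange_poly :: "(nat \<Rightarrow> real) \<Rightarrow> (nat \<Rightarrow> real) \<Rightarrow> nat set \<Rightarrow> real poly" where
  "lagrange_poly s y I =
     (\<Sum>i\<in>I. smult (y i / poly (node_poly s (I - {i})) (s i)) (node_poly s (I - {i})))"

lemma degree_lagrange_poly:
  assumes "finite I"
  shows "degree (lagrange_poly s y I) \<le> card I - 1"
  unfolding lagrange_poly_def
proof (rule degree_sum_le)
  fix i assume "i \<in> I"
  then show "degree (smult (y i / poly (node_poly s (I - {i})) (s i)) (node_poly s (I - {i}))) \<le> card I - 1"
    using assms by (simp add: degree_node_poly)
qed (use assms in auto)

lemma poly_lagrange_poly_node:
  assumes I: "finite I" "inj_on s I" "i \<in> I"
  shows "poly (lagrange_poly s y I) (s i) = y i"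
proof -
  have vanish: "poly (node_poly s (I - {m})) (s i) = 0" if "m \<in> I" "m \<noteq> i" for m
    using I that by (auto simp: prod_zero_iff)
  have nz: "poly (node_poly s (I - {i})) (s i) \<noteq> 0"
    using I by (auto simp: prod_zero_iff inj_on_eq_iff)
  have "poly (lagrange_poly s y I) (s i) =
      (\<Sum>m\<in>I. y m / poly (node_poly s (I - {m})) (s m) * poly (node_poly s (I - {m})) (s i))"
    by (simp add: lagrange_poly_def poly_sum del: poly_node_poly)
  also have "\<dots> = y i / poly (node_poly s (I - {i})) (s i) * poly (node_poly s (I - {i})) (s i)"
    using I vanish by (subst sum.remove[of I i]) (auto intro!: sum.neutral)
  finally show ?thesis using nz by simp
qed

lemma poly_diff_degree_le_1:
  fixes q :: "real poly"
  assumes "degree q \<le> 1"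
  shows "poly q a - poly q b = coeff q 1 * (a - b)"
proof -
  obtain c q' where q: "q = pCons c q'" by (rule pCons_cases)
  then have "degree q' = 0" using assms by (auto split: if_splits)
  then obtain d where "q' = [:d:]" using degree0_coeffs by blast
  then show ?thesis using q by (simp add: algebra_simps)
qed

lemma abs_poly_lagrange_poly_le:
  fixes s y :: "nat \<Rightarrow> real" and x h L M :: real
  assumes I: "finite I" and h: "h > 0"
    and sep: "\<And>i j. i \<in> I \<Longrightarrow> j \<in> I \<Longrightarrow> i \<noteq> j \<Longrightarrow> h \<le> \<bar>s i - s j\<bar>"
    and near: "\<And>i. i \<in> I \<Longrightarrow> \<bar>x - s i\<bar> \<le> L"
    and y: "\<And>i. i \<in> I \<Longrightarrow> \<bar>y i\<bar> \<le> M"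
  shows "\<bar>poly (lagrange_poly s y I) x\<bar> \<le> real (card I) * M * (L / h) ^ (card I - 1)"
proof -
  have term_le: "\<bar>y i / poly (node_poly s (I - {i})) (s i) * poly (node_poly s (I - {i})) x\<bar>
      \<le> M * (L / h) ^ (card I - 1)" if i: "i \<in> I" for i
  proof -
    have card: "card (I - {i}) = card I - 1" using I i by simp
    have num: "\<bar>poly (node_poly s (I - {i})) x\<bar> \<le> L ^ (card I - 1)"
      using prod_mono[of "I - {i}" "\<lambda>j. \<bar>x - s j\<bar>" "\<lambda>_. L"] near card
      by (simp add: abs_prod)
    have den: "h ^ (card I - 1) \<le> \<bar>poly (node_poly s (I - {i})) (s i)\<bar>"
      using prod_mono[of "I - {i}" "\<lambda>_. h" "\<lambda>j. \<bar>s i - s j\<bar>"] h sep i card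
      by (simp add: abs_prod)
    have "\<bar>y i / poly (node_poly s (I - {i})) (s i) * poly (node_poly s (I - {i})) x\<bar>
        = \<bar>y i\<bar> * \<bar>poly (node_poly s (I - {i})) x\<bar> / \<bar>poly (node_poly s (I - {i})) (s i)\<bar>"
      by (simp add: abs_mult abs_divide del: poly_node_poly)
    also have "\<dots> \<le> M * L ^ (card I - 1) / h ^ (card I - 1)"
      using y[OF i] num den h by (intro frac_le mult_mono) auto
    finally show ?thesis by (simp add: power_divide)
  qed
  have "\<bar>poly (lagrange_poly s y I) x\<bar>
      \<le> (\<Sum>i\<in>I. \<bar>y i / poly (node_poly s (I - {i})) (s i) * poly (node_poly s (I - {i})) x\<bar>)"
    unfolding lagrange_poly_def poly_sum poly_smult by (rule sum_abs)
  also have "\<dots> \<le> real (card I) * (M * (L / h) ^ (card I - 1))"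
    using sum_mono[OF term_le] by simp
  finally show ?thesis by simp
qed

lemma coeff_higher_pderiv_node_poly_ge_1: "1 \<le> coeff ((pderiv ^^ k) (node_poly s {..k})) 1"
proof -
  have "coeff ((pderiv ^^ k) (node_poly s {..k})) 1 = of_nat (pochhammer 2 k)"
    using lead_coeff_node_poly[of "{..k}" s]
    by (simp add: coeff_higher_pderiv pochhammer_of_nat[symmetric] add.commute)
  moreover have "pochhammer (2::nat) k > 0" by (rule pochhammer_pos) simp
  ultimately show ?thesis by simp
qed

lemma interpolation_error_le:
  fixes D :: "nat \<Rightarrow> real \<Rightarrow> real" and P :: "real poly"
  assumes D: "\<And>l x. l < k \<Longrightarrow> (D l has_real_derivative D (Suc l) x) (at x)"
    and lip: "1-lipschitz_on UNIV (D k)"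
    and inj: "inj_on s {..k}"
    and deg: "degree P \<le> k"
    and nodes: "\<And>i. i \<le> k \<Longrightarrow> poly P (s i) = D 0 (s i)"
  shows "\<bar>D 0 x - poly P x\<bar> \<le> (\<Prod>i\<le>k. \<bar>x - s i\<bar>)"
proof (cases "x \<in> s ` {..k}")
  case True
  then show ?thesis using nodes by (auto intro!: prod_nonneg)
next
  case False
  define \<omega> where "\<omega> = node_poly s {..k}"
  have \<omega>x: "poly \<omega> x \<noteq> 0" using False by (auto simp: \<omega>_def prod_zero_iff)
  define K where "K = (D 0 x - poly P x) / poly \<omega> x"
  \<comment> \<open>The classical Rolle argument: \<open>D 0 - P - K \<omega>\<close> has \<open>k + 2\<close> zeros, so its \<open>k\<close>-th derivative has two.\<close>
  define F where "F l y = D l y - poly ((pderiv ^^ l) P) y - K * poly ((pderiv ^^ l) \<omega>) y" for l y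
  have F: "(F l has_real_derivative F (Suc l) y) (at y)" if "l < k" for l y
    unfolding F_def funpow.simps o_apply using D[OF that]
    by (intro DERIV_diff DERIV_cmult poly_DERIV)
  have "card (insert x (s ` {..k})) = 2 + k"
    using False card_image[OF inj] by simp
  moreover have "\<forall>z\<in>insert x (s ` {..k}). F 0 z = 0"
    using \<omega>x nodes by (auto simp: F_def K_def \<omega>_def)
  ultimately obtain Z where "finite Z" "card Z = 2" "\<forall>z\<in>Z. F k z = 0"
    using higher_deriv_card_zeros[of k F "insert x (s ` {..k})" 2, OF F] by auto
  then obtain a b where ab: "a \<noteq> b" "F k a = 0" "F k b = 0" by (auto simp: card_2_iff)
  define c where "c = coeff ((pderiv ^^ k) \<omega>) 1"
  have c: "c \<ge> 1" unfolding c_def \<omega>_def by (rule coeff_higher_pderiv_node_poly_ge_1)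
  have "poly ((pderiv ^^ k) P) a = poly ((pderiv ^^ k) P) b"
    using poly_diff_degree_le_1[of "(pderiv ^^ k) P" a b] deg
    by (simp add: degree_higher_pderiv coeff_eq_0)
  then have "D k a - D k b = K * (poly ((pderiv ^^ k) \<omega>) a - poly ((pderiv ^^ k) \<omega>) b)"
    using ab unfolding F_def by (simp add: algebra_simps)
  also have "\<dots> = K * c * (a - b)"
    using poly_diff_degree_le_1 degree_node_poly[of "{..k}" s]
    by (simp add: c_def \<omega>_def degree_higher_pderiv)
  finally have "D k a - D k b = K * c * (a - b)" .
  moreover have "\<bar>D k a - D k b\<bar> \<le> \<bar>a - b\<bar>"
    using lipschitz_onD[OF lip] by (simp add: dist_real_def)
  ultimately have "\<bar>K\<bar> * c \<le> 1"
    using ab(1) c by (simp add: abs_mult)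
  then have K: "\<bar>K\<bar> \<le> 1" using c mult_left_mono[of 1 c "\<bar>K\<bar>"] by linarith
  have "\<bar>D 0 x - poly P x\<bar> = \<bar>K\<bar> * (\<Prod>i\<le>k. \<bar>x - s i\<bar>)"
    using \<omega>x by (simp add: K_def \<omega>_def abs_mult abs_prod)
  also have "\<dots> \<le> (\<Prod>i\<le>k. \<bar>x - s i\<bar>)"
    using K by (intro mult_left_le_one_le prod_nonneg) auto
  finally show ?thesis .
qed

lemma abs_le_of_small_values_at_separated_nodes:
  fixes D :: "nat \<Rightarrow> real \<Rightarrow> real" and s :: "nat \<Rightarrow> real" and x h L M :: real
  assumes D: "\<And>l x. l < k \<Longrightarrow> (D l has_real_derivative D (Suc l) x) (at x)"
    and lip: "1-lipschitz_on UNIV (D k)" and h: "h > 0"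
    and sep: "\<And>i i'. i \<le> k \<Longrightarrow> i' \<le> k \<Longrightarrow> i \<noteq> i' \<Longrightarrow> h \<le> \<bar>s i - s i'\<bar>"
    and near: "\<And>i. i \<le> k \<Longrightarrow> \<bar>x - s i\<bar> \<le> L"
    and vals: "\<And>i. i \<le> k \<Longrightarrow> \<bar>D 0 (s i)\<bar> \<le> M"
  shows "\<bar>D 0 x\<bar> \<le> real (k + 1) * M * (L / h) ^ k + L ^ (k + 1)"
proof -
  define P where "P = lagrange_poly s (\<lambda>i. D 0 (s i)) {..k}"
  have inj: "inj_on s {..k}"
    unfolding inj_on_def using sep h by force
  have "\<bar>D 0 x - poly P x\<bar> \<le> (\<Prod>i\<le>k. \<bar>x - s i\<bar>)"
  proof (rule interpolation_error_le[OF D lip inj])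
    show "degree P \<le> k" using degree_lagrange_poly[of "{..k}"] by (simp add: P_def)
    show "poly P (s i) = D 0 (s i)" if "i \<le> k" for i
      using poly_lagrange_poly_node[OF _ inj] that by (simp add: P_def)
  qed
  also have "\<dots> \<le> (\<Prod>i\<le>k. L)" using near by (intro prod_mono) auto
  finally have "\<bar>D 0 x - poly P x\<bar> \<le> L ^ (k + 1)" by simp
  moreover have "\<bar>poly P x\<bar> \<le> real (k + 1) * M * (L / h) ^ k"
    using abs_poly_lagrange_poly_le[of "{..k}" h s x L "\<lambda>i. D 0 (s i)" M] h sep near vals
    by (simp add: P_def)
  ultimately show ?thesis by linarith
qed

section \<open>Absolutely continuous functions with bounded derivative\<close>

lemma real_interval_induct:
  fixes a b :: real
  assumes ab: "a \<le> b" and Pa: "P a"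
    and left: "\<And>x. a < x \<Longrightarrow> x \<le> b \<Longrightarrow> (\<And>y. a \<le> y \<Longrightarrow> y < x \<Longrightarrow> P y) \<Longrightarrow> P x"
    and right: "\<And>x. a \<le> x \<Longrightarrow> x < b \<Longrightarrow> (\<And>y. a \<le> y \<Longrightarrow> y \<le> x \<Longrightarrow> P y) \<Longrightarrow>
      \<exists>\<eta>>0. \<forall>y. x < y \<and> y < x + \<eta> \<and> y \<le> b \<longrightarrow> P y"
  shows "P b"
proof -
  define A where "A = {x. a \<le> x \<and> x \<le> b \<and> (\<forall>y. a \<le> y \<and> y \<le> x \<longrightarrow> P y)}"
  define \<sigma> where "\<sigma> = Sup A"
  have aA: "a \<in> A" using ab Pa unfolding A_def by (auto dest: antisym)
  have bddA: "bdd_above A" unfolding A_def bdd_above_def by auto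
  have \<sigma>a: "a \<le> \<sigma>" unfolding \<sigma>_def by (rule cSup_upper[OF aA bddA])
  have \<sigma>b: "\<sigma> \<le> b" unfolding \<sigma>_def by (rule cSup_least) (use aA A_def in auto)
  have below: "P y" if y: "a \<le> y" "y < \<sigma>" for y
  proof -
    obtain x where "x \<in> A" "y < x" using less_cSupD[of A y] aA y(2) \<sigma>_def by blast
    then show ?thesis using y(1) A_def by auto
  qed
  have P\<sigma>: "P \<sigma>"
  proof (cases "a < \<sigma>")
    case True
    then show ?thesis using left[OF True \<sigma>b] below by blast
  next
    case False
    then show ?thesis using \<sigma>a Pa by simp
  qed
  have upto: "P y" if "a \<le> y" "y \<le> \<sigma>" for y
    using below P\<sigma> that by (cases "y < \<sigma>") auto
  have "\<sigma> = b"
  proof (rule ccontr)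
    assume "\<sigma> \<noteq> b"
    then have "\<sigma> < b" using \<sigma>b by simp
    then obtain \<eta> where \<eta>: "\<eta> > 0" "\<forall>y. \<sigma> < y \<and> y < \<sigma> + \<eta> \<and> y \<le> b \<longrightarrow> P y"
      using right[OF \<sigma>a _ upto] by blast
    define x where "x = min b (\<sigma> + \<eta> / 2)"
    have "\<sigma> < x" using \<open>\<sigma> < b\<close> \<eta>(1) by (simp add: x_def)
    have "x \<in> A"
      unfolding A_def
    proof (intro CollectI conjI allI impI)
      show "a \<le> x" using \<open>\<sigma> < x\<close> \<sigma>a by simp
      show "x \<le> b" by (simp add: x_def)
      fix y assume "a \<le> y \<and> y \<le> x"
      then show "P y" using upto \<eta>(1,2) by (cases "y \<le> \<sigma>") (auto simp: x_def)
    qed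
    then have "x \<le> \<sigma>" unfolding \<sigma>_def by (rule cSup_upper[OF _ bddA])
    then show False using \<open>\<sigma> < x\<close> by simp
  qed
  then show ?thesis using P\<sigma> by simp
qed

lemma DERIV_right_increment_le:
  fixes f :: "real \<Rightarrow> real"
  assumes "(f has_real_derivative f') (at x)" and "f' < c"
  shows "\<exists>\<eta>>0. \<forall>y. x < y \<and> y < x + \<eta> \<longrightarrow> f y - f x \<le> c * (y - x)"
proof -
  have "((\<lambda>y. (f y - f x) / (y - x)) \<longlongrightarrow> f') (at x)"
    using assms(1) has_field_derivative_iff by blast
  moreover have "c - f' > 0" using assms(2) by simp
  ultimately have "\<forall>\<^sub>F y in at x. dist ((f y - f x) / (y - x)) f' < c - f'"
    by (rule tendstoD)
  then obtain \<eta> where \<eta>: "\<eta> > 0"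
    "\<And>y. y \<noteq> x \<Longrightarrow> dist y x < \<eta> \<Longrightarrow> dist ((f y - f x) / (y - x)) f' < c - f'"
    unfolding eventually_at by blast
  have "f y - f x \<le> c * (y - x)" if "x < y" "y < x + \<eta>" for y
  proof -
    have "\<bar>(f y - f x) / (y - x) - f'\<bar> < c - f'"
      using \<eta>(2)[of y] that by (simp add: dist_real_def)
    then have "(f y - f x) / (y - x) < c" by linarith
    then show ?thesis using that by (simp add: pos_divide_less_eq)
  qed
  then show ?thesis using \<eta>(1) by blast
qed

definition nonoverlapping_in :: "real set \<Rightarrow> nat \<Rightarrow> (nat \<Rightarrow> real) \<Rightarrow> (nat \<Rightarrow> real) \<Rightarrow> bool" where
  "nonoverlapping_in S N u v \<longleftrightarrow>
     (\<forall>i<N. u i \<le> v i \<and> {u i..v i} \<subseteq> S) \<and> (\<forall>i<N. \<forall>k<N. i \<noteq> k \<longrightarrow> v i \<le> u k \<or> v k \<le> u i)"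

lemma nonoverlapping_in_mono:
  "nonoverlapping_in S N u v \<Longrightarrow> S \<subseteq> S' \<Longrightarrow> nonoverlapping_in S' N u v"
  unfolding nonoverlapping_in_def by blast

lemma nonoverlapping_in_extend:
  assumes "nonoverlapping_in S N u v" "\<forall>i<N. v i \<le> s" "s \<le> t" "{s..t} \<subseteq> S"
  shows "nonoverlapping_in S (Suc N) (u(N := s)) (v(N := t))"
  using assms unfolding nonoverlapping_in_def by (auto simp: less_Suc_eq)

lemma nonoverlapping_in_length_le_emeasure:
  assumes "nonoverlapping_in S N u v" "S \<in> sets lebesgue"
  shows "ennreal (\<Sum>i<N. v i - u i) \<le> emeasure lebesgue S"
proof -
  have uv: "\<forall>i<N. u i \<le> v i \<and> {u i..v i} \<subseteq> S"
    and no: "\<forall>i<N. \<forall>k<N. i \<noteq> k \<longrightarrow> v i \<le> u k \<or> v k \<le> u i"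
    using assms(1) by (auto simp: nonoverlapping_in_def)
  have "disjoint_family_on (\<lambda>i. {u i<..<v i}) {..<N}"
    unfolding disjoint_family_on_def using no by fastforce
  then have "emeasure lebesgue (\<Union>i<N. {u i<..<v i}) = (\<Sum>i<N. emeasure lebesgue {u i<..<v i})"
    by (intro sum_emeasure[symmetric]) auto
  also have "\<dots> = (\<Sum>i<N. ennreal (v i - u i))"
    using uv by (intro sum.cong) auto
  also have "\<dots> = ennreal (\<Sum>i<N. v i - u i)"
    using uv by (intro sum_ennreal) auto
  finally have "ennreal (\<Sum>i<N. v i - u i) = emeasure lebesgue (\<Union>i<N. {u i<..<v i})" ..
  also have "\<dots> \<le> emeasure lebesgue S"
    using uv assms(2) by (intro emeasure_mono) fastforce+
  finally show ?thesis .
qed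

lemma abs_cont_onE:
  assumes "abs_cont_on a b f" "\<epsilon> > 0"
  obtains \<delta> where "\<delta> > 0"
    "\<And>N u v. nonoverlapping_in {a..b} N u v \<Longrightarrow> (\<Sum>i<N. v i - u i) < \<delta> \<Longrightarrow>
       (\<Sum>i<N. \<bar>f (v i) - f (u i)\<bar>) < \<epsilon>"
  using assms(1)[unfolded abs_cont_on_def, rule_format, OF assms(2)]
proof (elim exE conjE)
  fix \<delta> :: real
  assume \<delta>: "\<delta> > 0" and small: "\<forall>(N::nat) u v. (\<forall>i<N. a \<le> u i \<and> u i \<le> v i \<and> v i \<le> b) \<and>
      (\<forall>i<N. \<forall>k<N. i \<noteq> k \<longrightarrow> v i \<le> u k \<or> v k \<le> u i) \<and> (\<Sum>i<N. v i - u i) < \<delta>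
      \<longrightarrow> (\<Sum>i<N. \<bar>f (v i) - f (u i)\<bar>) < \<epsilon>"
  show ?thesis
  proof (rule that[OF \<delta>])
    fix N u v assume uv: "nonoverlapping_in {a..b} N u v" and len: "(\<Sum>i<N. v i - u i) < \<delta>"
    have "\<forall>i<N. a \<le> u i \<and> u i \<le> v i \<and> v i \<le> b"
      using uv unfolding nonoverlapping_in_def by (simp add: atLeastatMost_subset_iff)
    moreover have "\<forall>i<N. \<forall>k<N. i \<noteq> k \<longrightarrow> v i \<le> u k \<or> v k \<le> u i"
      using uv unfolding nonoverlapping_in_def by (elim conjE)
    ultimately show "(\<Sum>i<N. \<bar>f (v i) - f (u i)\<bar>) < \<epsilon>"
      using small[rule_format, of N u v] len by blast
  qed
qed

lemma abs_cont_on_imp_uniformly_continuous_on: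
  assumes "abs_cont_on a b f"
  shows "uniformly_continuous_on {a..b} f"
  unfolding uniformly_continuous_on_def
proof (intro allI impI)
  fix \<epsilon> :: real assume "\<epsilon> > 0"
  then obtain \<delta> where \<delta>: "\<delta> > 0" "\<And>N u v. nonoverlapping_in {a..b} N u v \<Longrightarrow>
      (\<Sum>i<N. v i - u i) < \<delta> \<Longrightarrow> (\<Sum>i<N. \<bar>f (v i) - f (u i)\<bar>) < \<epsilon>"
    using abs_cont_onE[OF assms] by blast
  have incr: "\<bar>f t - f s\<bar> < \<epsilon>" if "s \<in> {a..b}" "t \<in> {a..b}" "s \<le> t" "t - s < \<delta>" for s t
    using \<delta>(2)[of 1 "\<lambda>_. s" "\<lambda>_. t"] that by (simp add: nonoverlapping_in_def)
  then have "dist (f t) (f s) < \<epsilon>" if "s \<in> {a..b}" "t \<in> {a..b}" "dist t s < \<delta>" for s t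
  proof (cases "s \<le> t")
    case True
    then show ?thesis using incr[of s t] that by (simp add: dist_real_def)
  next
    case False
    then show ?thesis using incr[of t s] that by (simp add: dist_real_def abs_minus_commute)
  qed
  then show "\<exists>\<delta>>0. \<forall>x\<in>{a..b}. \<forall>x'\<in>{a..b}. dist x' x < \<delta> \<longrightarrow> dist (f x') (f x) < \<epsilon>"
    using \<delta>(1) by blast
qed

definition variation_sums :: "real set \<Rightarrow> (real \<Rightarrow> real) \<Rightarrow> real set" where
  "variation_sums S f = {\<Sum>i<N. \<bar>f (v i) - f (u i)\<bar> | N u v. nonoverlapping_in S N u v}"

text \<open>\<open>Sup\<close> on \<open>real\<close> is junk for unbounded sets, hence the \<open>bdd_above\<close> hypotheses below.\<close>

definition variation_within :: "real set \<Rightarrow> (real \<Rightarrow> real) \<Rightarrow> real" where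
  "variation_within S f = Sup (variation_sums S f)"

lemma variation_within_le:
  assumes "\<And>N u v. nonoverlapping_in S N u v \<Longrightarrow> (\<Sum>i<N. \<bar>f (v i) - f (u i)\<bar>) \<le> B"
  shows "variation_within S f \<le> B"
  unfolding variation_within_def
proof (rule cSup_least)
  have "nonoverlapping_in S 0 u v" for u v by (simp add: nonoverlapping_in_def)
  then have "0 \<in> variation_sums S f" unfolding variation_sums_def by force
  then show "variation_sums S f \<noteq> {}" by blast
next
  fix x assume "x \<in> variation_sums S f"
  then show "x \<le> B" unfolding variation_sums_def using assms by blast
qed

lemma bdd_above_variation_sums:
  assumes "\<And>N u v. nonoverlapping_in S N u v \<Longrightarrow> (\<Sum>i<N. \<bar>f (v i) - f (u i)\<bar>) \<le> B"
  shows "bdd_above (variation_sums S f)"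
  by (rule bdd_aboveI[of _ B]) (auto simp: variation_sums_def intro: assms)

lemma bdd_above_variation_sums_subset:
  assumes "bdd_above (variation_sums S' f)" and "S \<subseteq> S'"
  shows "bdd_above (variation_sums S f)"
proof (rule bdd_above_mono[OF assms(1)])
  show "variation_sums S f \<subseteq> variation_sums S' f"
    unfolding variation_sums_def using nonoverlapping_in_mono[OF _ assms(2)] by blast
qed

lemma sum_le_variation_within:
  assumes "bdd_above (variation_sums S f)" and "nonoverlapping_in S N u v"
  shows "(\<Sum>i<N. \<bar>f (v i) - f (u i)\<bar>) \<le> variation_within S f"
  unfolding variation_within_def
  by (rule cSup_upper) (use assms in \<open>auto simp: variation_sums_def\<close>)

lemma variation_within_nonneg:
  assumes "bdd_above (variation_sums S f)"
  shows "0 \<le> variation_within S f"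
  using sum_le_variation_within[OF assms, where N=0] by (simp add: nonoverlapping_in_def)

lemma variation_within_mono:
  assumes "bdd_above (variation_sums S' f)" and "S \<subseteq> S'"
  shows "variation_within S f \<le> variation_within S' f"
proof (rule variation_within_le)
  fix N u v assume "nonoverlapping_in S N u v"
  then have "nonoverlapping_in S' N u v" using assms(2) by (rule nonoverlapping_in_mono)
  then show "(\<Sum>i<N. \<bar>f (v i) - f (u i)\<bar>) \<le> variation_within S' f"
    by (rule sum_le_variation_within[OF assms(1)])
qed

lemma variation_within_extend:
  assumes bdd: "bdd_above (variation_sums S' f)"
    and S: "S \<subseteq> S'" "S \<subseteq> {..s}" and "s \<le> t" "{s..t} \<subseteq> S'"
  shows "variation_within S f + \<bar>f t - f s\<bar> \<le> variation_within S' f"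
proof -
  have "(\<Sum>i<N. \<bar>f (v i) - f (u i)\<bar>) \<le> variation_within S' f - \<bar>f t - f s\<bar>"
    if uv: "nonoverlapping_in S N u v" for N u v
  proof -
    have "nonoverlapping_in S' N u v" using uv S(1) by (rule nonoverlapping_in_mono)
    moreover have "\<forall>i<N. v i \<le> s" using uv S(2) unfolding nonoverlapping_in_def by fastforce
    ultimately have "nonoverlapping_in S' (Suc N) (u(N := s)) (v(N := t))"
      using assms(4,5) by (rule nonoverlapping_in_extend)
    from sum_le_variation_within[OF bdd this] show ?thesis by simp
  qed
  then have "variation_within S f \<le> variation_within S' f - \<bar>f t - f s\<bar>"
    by (rule variation_within_le)
  then show ?thesis by simp
qed

lemma abs_cont_on_small_variation_near_null_set:
  assumes ac: "abs_cont_on a b f" and N: "N \<in> null_sets lebesgue" and e: "e > 0"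
  obtains T where "open T" "N \<subseteq> T"
    "\<And>M u v. nonoverlapping_in ({a..b} \<inter> T) M u v \<Longrightarrow> (\<Sum>i<M. \<bar>f (v i) - f (u i)\<bar>) \<le> e"
proof -
  obtain \<delta> where \<delta>: "\<delta> > 0" "\<And>M u v. nonoverlapping_in {a..b} M u v \<Longrightarrow>
      (\<Sum>i<M. v i - u i) < \<delta> \<Longrightarrow> (\<Sum>i<M. \<bar>f (v i) - f (u i)\<bar>) < e"
    using abs_cont_onE[OF ac e] by blast
  obtain T where T: "open T" "N \<subseteq> T" "T - N \<in> lmeasurable" "emeasure lebesgue (T - N) < ennreal \<delta>"
    using sets_lebesgue_outer_open[OF null_setsD2[OF N] \<delta>(1)] by blast
  have "emeasure lebesgue T = emeasure lebesgue ((T - N) \<union> N)"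
    using T(2) by (simp add: Un_absorb2)
  also have "\<dots> = emeasure lebesgue (T - N)"
    by (rule emeasure_Un_null_set) (use T(3) N in auto)
  finally have T_small: "emeasure lebesgue T < ennreal \<delta>" using T(4) by simp
  show ?thesis
  proof (rule that[OF T(1,2)])
    fix M u v assume uv: "nonoverlapping_in ({a..b} \<inter> T) M u v"
    have "ennreal (\<Sum>i<M. v i - u i) \<le> emeasure lebesgue T"
      by (rule nonoverlapping_in_length_le_emeasure[OF nonoverlapping_in_mono[OF uv]])
        (use T(1) in auto)
    then have "ennreal (\<Sum>i<M. v i - u i) < ennreal \<delta>" using T_small by (rule order.strict_trans1)
    moreover have "0 \<le> (\<Sum>i<M. v i - u i)"
      using uv unfolding nonoverlapping_in_def by (auto intro: sum_nonneg)
    ultimately have "(\<Sum>i<M. v i - u i) < \<delta>" by (simp add: ennreal_less_iff)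
    moreover have "nonoverlapping_in {a..b} M u v" by (rule nonoverlapping_in_mono[OF uv]) auto
    ultimately show "(\<Sum>i<M. \<bar>f (v i) - f (u i)\<bar>) \<le> e" using \<delta>(2) by (simp add: less_imp_le)
  qed
qed

lemma increment_le_of_right_estimates:
  fixes f G :: "real \<Rightarrow> real"
  assumes ab: "a \<le> b" and cont: "continuous_on {a..b} f" and c: "c \<ge> 0"
    and G_nonneg: "0 \<le> G a" and G_mono: "\<And>x y. a \<le> x \<Longrightarrow> x \<le> y \<Longrightarrow> y \<le> b \<Longrightarrow> G x \<le> G y"
    and right: "\<And>x. a \<le> x \<Longrightarrow> x < b \<Longrightarrow>
      \<exists>\<eta>>0. \<forall>y. x < y \<and> y < x + \<eta> \<and> y \<le> b \<longrightarrow> f y - f x \<le> c * (y - x) + (G y - G x)"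
  shows "f b - f a \<le> c * (b - a) + G b"
proof -
  define P where "P x \<longleftrightarrow> f x - f a \<le> c * (x - a) + G x" for x
  have "P b"
  proof (rule real_interval_induct[OF ab])
    show "P a" using G_nonneg by (simp add: P_def)
  next
    fix x assume x: "a < x" "x \<le> b" and below: "\<And>y. a \<le> y \<Longrightarrow> y < x \<Longrightarrow> P y"
    show "P x" unfolding P_def
    proof (rule field_le_epsilon)
      fix \<theta> :: real assume "\<theta> > 0"
      moreover have "x \<in> {a..b}" using x by simp
      ultimately obtain d where d: "d > 0" "\<forall>y\<in>{a..b}. dist y x < d \<longrightarrow> dist (f y) (f x) < \<theta>"
        using cont unfolding continuous_on_iff by blast
      define y where "y = max a (x - d / 2)"
      have y: "a \<le> y" "y < x" "x - y < d" using x d(1) by (auto simp: y_def)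
      then have "y \<in> {a..b}" "dist y x < d" using x by (auto simp: dist_real_def)
      then have "f x - f y < \<theta>" using d(2) by (auto simp: dist_real_def abs_less_iff)
      moreover have "P y" using below y by simp
      moreover have "G y \<le> G x" using G_mono y x by simp
      moreover have "c * (y - a) \<le> c * (x - a)" using y c by (intro mult_left_mono) auto
      ultimately show "f x - f a \<le> c * (x - a) + G x + \<theta>" unfolding P_def by linarith
    qed
  next
    fix x assume x: "a \<le> x" "x < b" and upto: "\<And>y. a \<le> y \<Longrightarrow> y \<le> x \<Longrightarrow> P y"
    obtain \<eta> where \<eta>: "\<eta> > 0" "\<forall>y. x < y \<and> y < x + \<eta> \<and> y \<le> b \<longrightarrow> f y - f x \<le> c * (y - x) + (G y - G x)"
      using right[OF x] by blast
    have "P y" if "x < y" "y < x + \<eta>" "y \<le> b" for y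
    proof -
      have "f y - f x \<le> c * (y - x) + (G y - G x)" using \<eta>(2) that by blast
      moreover have "P x" using upto x(1) by simp
      moreover have "c * (y - x) + c * (x - a) = c * (y - a)" by (simp add: algebra_simps)
      ultimately show ?thesis unfolding P_def by linarith
    qed
    then show "\<exists>\<eta>>0. \<forall>y. x < y \<and> y < x + \<eta> \<and> y \<le> b \<longrightarrow> P y" using \<eta>(1) by blast
  qed
  then show ?thesis by (simp add: P_def)
qed

lemma right_increment_le_near_null_set:
  fixes f f' :: "real \<Rightarrow> real"
  assumes T: "open T" "N \<subseteq> T" and bdd: "bdd_above (variation_sums ({a..b} \<inter> T) f)"
    and deriv: "\<And>x. x \<notin> N \<Longrightarrow> (f has_real_derivative f' x) (at x) \<and> f' x \<le> 1"
    and e: "e > 0" and x: "a \<le> x" "x < b"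
  shows "\<exists>\<eta>>0. \<forall>y. x < y \<and> y < x + \<eta> \<and> y \<le> b \<longrightarrow>
    f y - f x \<le> (1 + e) * (y - x) + (variation_within ({a..y} \<inter> T) f - variation_within ({a..x} \<inter> T) f)"
proof (cases "x \<in> T")
  case True
  then obtain \<eta> where \<eta>: "\<eta> > 0" "ball x \<eta> \<subseteq> T" using T(1) open_contains_ball by blast
  have "\<bar>f y - f x\<bar> \<le> variation_within ({a..y} \<inter> T) f - variation_within ({a..x} \<inter> T) f"
    if y: "x < y" "y < x + \<eta>" "y \<le> b" for y
  proof -
    have "{x..y} \<subseteq> T" using \<eta>(2) y by (auto simp: dist_real_def subset_iff)
    moreover have "bdd_above (variation_sums ({a..y} \<inter> T) f)"
      using y by (intro bdd_above_variation_sums_subset[OF bdd]) auto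
    ultimately have "variation_within ({a..x} \<inter> T) f + \<bar>f y - f x\<bar> \<le> variation_within ({a..y} \<inter> T) f"
      using x y by (intro variation_within_extend) auto
    then show ?thesis by simp
  qed
  moreover have "0 \<le> (1 + e) * (y - x)" if "x < y" for y using e that by simp
  ultimately show ?thesis using \<eta>(1) by (smt (verit))
next
  case False
  then have "(f has_real_derivative f' x) (at x)" "f' x < 1 + e" using deriv T(2) e by force+
  then obtain \<eta> where \<eta>: "\<eta> > 0" "\<forall>y. x < y \<and> y < x + \<eta> \<longrightarrow> f y - f x \<le> (1 + e) * (y - x)"
    using DERIV_right_increment_le by blast
  have "variation_within ({a..x} \<inter> T) f \<le> variation_within ({a..y} \<inter> T) f" if "x < y" "y \<le> b" for y
    using that by (intro variation_within_mono bdd_above_variation_sums_subset[OF bdd]) auto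
  then show ?thesis using \<eta> by (smt (verit))
qed

lemma abs_cont_increment_le_eps:
  fixes f f' :: "real \<Rightarrow> real"
  assumes ac: "abs_cont_on a b f"
    and deriv: "\<And>x. x \<notin> N \<Longrightarrow> (f has_real_derivative f' x) (at x) \<and> f' x \<le> 1"
    and N: "N \<in> null_sets lebesgue" and ab: "a \<le> b" and e: "e > 0"
  shows "f b - f a \<le> (1 + e) * (b - a) + e"
proof -
  obtain T where T: "open T" "N \<subseteq> T"
    and small: "\<And>M u v. nonoverlapping_in ({a..b} \<inter> T) M u v \<Longrightarrow> (\<Sum>i<M. \<bar>f (v i) - f (u i)\<bar>) \<le> e"
    using abs_cont_on_small_variation_near_null_set[OF ac N e] by blast
  have bdd: "bdd_above (variation_sums ({a..b} \<inter> T) f)" using small by (rule bdd_above_variation_sums)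
  \<comment> \<open>Near \<open>N\<close> the increments of \<open>f\<close> are paid for by the variation of \<open>f\<close> inside \<open>T\<close>,
    elsewhere by the derivative bound.\<close>
  define G where "G x = variation_within ({a..x} \<inter> T) f" for x
  have "f b - f a \<le> (1 + e) * (b - a) + G b"
  proof (rule increment_le_of_right_estimates[OF ab])
    show "continuous_on {a..b} f"
      by (rule uniformly_continuous_imp_continuous[OF abs_cont_on_imp_uniformly_continuous_on[OF ac]])
    show "0 \<le> G a" unfolding G_def
      by (rule variation_within_nonneg[OF bdd_above_variation_sums_subset[OF bdd]]) (use ab in auto)
    show "G x \<le> G y" if "a \<le> x" "x \<le> y" "y \<le> b" for x y
      unfolding G_def using that by (intro variation_within_mono bdd_above_variation_sums_subset[OF bdd]) auto
    show "\<exists>\<eta>>0. \<forall>y. x < y \<and> y < x + \<eta> \<and> y \<le> b \<longrightarrow> f y - f x \<le> (1 + e) * (y - x) + (G y - G x)"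
      if "a \<le> x" "x < b" for x
      unfolding G_def by (rule right_increment_le_near_null_set[OF T bdd deriv e that])
  qed (use e in simp)
  moreover have "G b \<le> e" unfolding G_def by (rule variation_within_le[OF small])
  ultimately show ?thesis by linarith
qed

lemma abs_cont_increment_le:
  fixes f f' :: "real \<Rightarrow> real"
  assumes ac: "abs_cont_on a b f"
    and deriv: "\<And>x. x \<notin> N \<Longrightarrow> (f has_real_derivative f' x) (at x) \<and> f' x \<le> 1"
    and N: "N \<in> null_sets lebesgue" and ab: "a \<le> b"
  shows "f b - f a \<le> b - a"
proof (rule field_le_epsilon)
  fix e :: real assume "e > 0"
  define e' where "e' = e / (b - a + 1)"
  have "e' > 0" using \<open>e > 0\<close> ab by (simp add: e'_def)
  have "f b - f a \<le> (1 + e') * (b - a) + e'"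
    by (rule abs_cont_increment_le_eps[OF ac deriv N ab \<open>e' > 0\<close>])
  also have "\<dots> = b - a + e' * (b - a + 1)" by (simp add: algebra_simps)
  also have "e' * (b - a + 1) = e" using ab by (simp add: e'_def)
  finally show "f b - f a \<le> b - a + e" .
qed

lemma abs_cont_deriv_bounded_imp_lipschitz:
  fixes f f' :: "real \<Rightarrow> real"
  assumes ac: "\<And>a b. abs_cont_on a b f"
    and ae: "AE x in lborel. (f has_real_derivative f' x) (at x) \<and> \<bar>f' x\<bar> \<le> 1"
  shows "1-lipschitz_on UNIV f"
proof (rule lipschitz_onI)
  from ae obtain N where N: "{x \<in> space lborel. \<not> ((f has_real_derivative f' x) (at x) \<and> \<bar>f' x\<bar> \<le> 1)} \<subseteq> N"
    "emeasure lborel N = 0" "N \<in> sets lborel"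
    by (rule AE_E)
  then have Nleb: "N \<in> null_sets lebesgue" by (intro null_sets_completionI null_setsI)
  have good: "(f has_real_derivative f' x) (at x) \<and> \<bar>f' x\<bar> \<le> 1" if "x \<notin> N" for x
    using N(1) that by auto
  have ac_neg: "abs_cont_on a b (\<lambda>x. - f x)" for a b
    using ac unfolding abs_cont_on_def by (simp add: abs_minus_commute)
  have incr: "\<bar>f y - f x\<bar> \<le> y - x" if "x \<le> y" for x y
  proof -
    have "f y - f x \<le> y - x"
      using good by (intro abs_cont_increment_le[OF ac _ Nleb that]) (auto simp: abs_le_iff)
    moreover have "- f y - - f x \<le> y - x"
      using good by (intro abs_cont_increment_le[OF ac_neg _ Nleb that]) (auto intro: DERIV_minus simp: abs_le_iff)
    ultimately show ?thesis by linarith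
  qed
  show "dist (f x) (f y) \<le> 1 * dist x y" for x y
    using incr[of x y] incr[of y x] by (cases "x \<le> y") (simp_all add: dist_real_def abs_minus_commute)
qed simp

lemma classW_imp_lipschitz_derivative:
  assumes "classW (Suc k) g"
  obtains D where "D 0 = g" "\<And>l x. l < k \<Longrightarrow> (D l has_real_derivative D (Suc l) x) (at x)"
    "1-lipschitz_on UNIV (D k)"
proof -
  from assms obtain D where "D 0 = g" "\<forall>l<k. \<forall>x. (D l has_real_derivative D (Suc l) x) (at x)"
    "\<forall>a b. abs_cont_on a b (D k)"
    "AE x in lborel. (D k has_real_derivative D (Suc k) x) (at x) \<and> \<bar>D (Suc k) x\<bar> \<le> 1"
    unfolding classW_def by auto
  then show thesis using that abs_cont_deriv_bounded_imp_lipschitz by blast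
qed

section \<open>The grid\<close>

lemma gridI_bounds:
  assumes "t \<in> gridI n \<nu>"
  shows "- (of_int \<nu> * (pi / real n)) \<le> t" "t \<le> - ((of_int \<nu> - 1) * (pi / real n))"
  using assms unfolding gridI_def gridpt_def by (auto simp: field_simps)

lemma gridI_separated:
  assumes "s \<in> gridI n \<mu>" "t \<in> gridI n \<nu>" "\<mu> + 2 \<le> \<nu>"
  shows "pi / real n \<le> s - t"
proof -
  define h where "h = pi / real n"
  have "(of_int \<mu> + 1) * h \<le> (of_int \<nu> - 1) * h"
    using assms(3) by (intro mult_right_mono) (auto simp: h_def)
  then show ?thesis
    using gridI_bounds[OF assms(1)] gridI_bounds[OF assms(2)] unfolding h_def[symmetric]
    by (simp add: algebra_simps)
qed

lemma gridI_close:
  assumes "s \<in> gridI n \<mu>" "t \<in> gridI n \<nu>" "\<mu> \<in> {j..k}" "\<nu> \<in> {j..k}"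
  shows "\<bar>s - t\<bar> \<le> (of_int (k - j) + 1) * (pi / real n)"
proof -
  define h where "h = pi / real n"
  have h: "0 \<le> h" by (simp add: h_def)
  have "of_int \<mu> * h \<le> of_int k * h" "of_int \<nu> * h \<le> of_int k * h"
    "(of_int j - 1) * h \<le> (of_int \<mu> - 1) * h" "(of_int j - 1) * h \<le> (of_int \<nu> - 1) * h"
    using assms(3,4) h by (auto intro!: mult_right_mono)
  then show ?thesis
    using gridI_bounds[OF assms(1)] gridI_bounds[OF assms(2)] unfolding h_def[symmetric]
    by (simp add: algebra_simps abs_le_iff)
qed

lemma grid_nodes:
  fixes g :: "real \<Rightarrow> real"
  assumes small: "\<forall>\<nu>\<in>{j .. j + 2 * int k}. \<exists>t\<in>gridI n \<nu>. \<bar>g t\<bar> \<le> B"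
  obtains s where "\<And>i. i \<le> k \<Longrightarrow> \<bar>g (s i)\<bar> \<le> B"
    "\<And>i i'. i \<le> k \<Longrightarrow> i' \<le> k \<Longrightarrow> i \<noteq> i' \<Longrightarrow> pi / real n \<le> \<bar>s i - s i'\<bar>"
    "\<And>x i. x \<in> (\<Union>\<nu>\<in>{j .. j + 2 * int k}. gridI n \<nu>) \<Longrightarrow> i \<le> k \<Longrightarrow>
       \<bar>x - s i\<bar> \<le> (2 * real k + 1) * (pi / real n)"
proof -
  have "\<forall>i\<in>{..k}. \<exists>t. t \<in> gridI n (j + 2 * int i) \<and> \<bar>g t\<bar> \<le> B" using small by auto
  then obtain s where s: "\<And>i. i \<le> k \<Longrightarrow> s i \<in> gridI n (j + 2 * int i) \<and> \<bar>g (s i)\<bar> \<le> B"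
    using bchoice[of "{..k}"] by (metis atMost_iff)
  show ?thesis
  proof (rule that)
    show "\<bar>g (s i)\<bar> \<le> B" if "i \<le> k" for i using s[OF that] by simp
    show "pi / real n \<le> \<bar>s i - s i'\<bar>" if "i \<le> k" "i' \<le> k" "i \<noteq> i'" for i i'
    proof (cases "i < i'")
      case True
      then show ?thesis using gridI_separated[of "s i" n _ "s i'"] s that by fastforce
    next
      case False
      then show ?thesis using gridI_separated[of "s i'" n _ "s i"] s that by fastforce
    qed
    show "\<bar>x - s i\<bar> \<le> (2 * real k + 1) * (pi / real n)"
      if "x \<in> (\<Union>\<nu>\<in>{j .. j + 2 * int k}. gridI n \<nu>)" "i \<le> k" for x i
      using that gridI_close[of x n _ "s i" _ j "j + 2 * int k"] s[OF that(2)] by fastforce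
  qed
qed

lemma classW_abs_le_on_grid_union:
  assumes n: "n \<ge> 1" and W: "classW (Suc k) g"
    and small: "\<forall>\<nu>\<in>{j .. j + 2 * int k}. \<exists>t\<in>gridI n \<nu>. \<bar>g t\<bar> \<le> (pi / real n) ^ (k + 1)"
    and x: "x \<in> (\<Union>\<nu>\<in>{j .. j + 2 * int k}. gridI n \<nu>)"
  shows "\<bar>g x\<bar> \<le> (real (k + 1) * (2 * real k + 1) ^ k + (2 * real k + 1) ^ (k + 1)) * (pi / real n) ^ (k + 1)"
proof -
  define h where "h = pi / real n"
  have h: "h > 0" using n by (simp add: h_def)
  obtain D where D: "D 0 = g" "\<And>l x. l < k \<Longrightarrow> (D l has_real_derivative D (Suc l) x) (at x)"
    "1-lipschitz_on UNIV (D k)" using classW_imp_lipschitz_derivative[OF W] by blast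
  obtain s where "\<And>i. i \<le> k \<Longrightarrow> \<bar>D 0 (s i)\<bar> \<le> h ^ (k + 1)"
    "\<And>i i'. i \<le> k \<Longrightarrow> i' \<le> k \<Longrightarrow> i \<noteq> i' \<Longrightarrow> h \<le> \<bar>s i - s i'\<bar>"
    "\<And>i. i \<le> k \<Longrightarrow> \<bar>x - s i\<bar> \<le> (2 * real k + 1) * h"
    using grid_nodes[OF small] x D(1) unfolding h_def by metis
  from abs_le_of_small_values_at_separated_nodes[OF D(2,3) h this(2,3,1)]
  have "\<bar>g x\<bar> \<le> real (k + 1) * h ^ (k + 1) * ((2 * real k + 1) * h / h) ^ k
      + ((2 * real k + 1) * h) ^ (k + 1)" using D(1) by simp
  also have "(2 * real k + 1) * h / h = 2 * real k + 1" using h by simp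
  finally show ?thesis unfolding h_def[symmetric] power_mult_distrib by (simp add: algebra_simps)
qed

theorem lemma1:
  fixes r :: nat
  assumes "r \<ge> 2"
  shows "\<exists>c1 > 0. \<forall>(n::nat) (g::real \<Rightarrow> real) (j::int).
           n \<ge> 1 \<longrightarrow> classW (r - 1) g \<longrightarrow>
           (\<forall>\<nu>\<in>{j .. j + 2 * (int r - 2)}. \<exists>t\<in>gridI n \<nu>. \<bar>g t\<bar> \<le> (pi / real n) ^ (r - 1)) \<longrightarrow>
           (\<forall>x \<in> (\<Union>\<nu>\<in>{j .. j + 2 * (int r - 2)}. gridI n \<nu>).
              \<bar>g x\<bar> \<le> c1 * (pi / real n) ^ (r - 1))"
proof -
  obtain k where k: "r = k + 2" using assms by (metis add.commute le_Suc_ex)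
  define c1 where "c1 = real (k + 1) * (2 * real k + 1) ^ k + (2 * real k + 1) ^ (k + 1)"
  have "c1 > 0" by (simp add: c1_def add_pos_nonneg)
  then show ?thesis
    using classW_abs_le_on_grid_union[where k = k, folded c1_def] unfolding k
    by (intro exI[of _ c1]) auto
qed

end
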